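(* Let $C$ be a commutative semigroup and let $I$ be an ideal of $C$ with $\mathrm{Sep}\, I\neq\emptyset$. Then $P_I$ is a congruence on $C$ such that $I$ and $\mathrm{Sep}\, I$ are $P_I$-classes of $C$, and the factor semigroup $S=C/P_I$ satisfies Condition $( * )$. Conversely, if $\alpha$ is a congruence on a commutative semigroup $C$ such that the factor semigroup $C/\alpha$ satisfies Condition $( * )$, then there is an ideal $I$ of $C$ such that $\alpha=P_I$.
   Context: For a semigroup $S$ and a subset $A\subseteq S$, the idealizer of $A$ is $\mathrm{Id}\,A=\{x\in S: xA\subseteq A,\ Ax\subseteq A\}$ (so $\mathrm{Id}\,\emptyset=S$), and the separator of $A$ is $\mathrm{Sep}\,A=\mathrm{Id}\,A\cap \mathrm{Id}(S\setminus A)$. For $H\subseteq S$ and $a\in S$, let $H\dots a=\{(x,y)\in S\times S: xay\in H\}$ (here $x,y$ range over $S$), and let $P_H=\{(a,b)\in S\times S: H\dots a=H\dots b\}$, the principal congruence on $S$ defined by $H$. For a commutative semigroup $S$ with zero $0$ and $s\in S$, the annihilator is $A(s)=\{x\in S: xs=0\}$. A semigroup $S$ satisfies Condition $( * )$ if: (1) $S$ is a commutative monoid with a zero; (2) for every non-identity element $s$ of $S$, $A(s)\neq\{0\}$; (3) for all $s,t\in S$, $A(s)=A(t)$ implies $s=t$. (A one-element semigroup satisfies Condition $( * )$.) *)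

theory Defs
  imports Main
begin

definition sg_ideal :: "'a::ab_semigroup_mult set \<Rightarrow> bool" where
  "sg_ideal I \<longleftrightarrow> I \<noteq> {} \<and> (\<forall>s a. a \<in> I \<longrightarrow> s * a \<in> I \<and> a * s \<in> I)"

definition idealizer :: "'a::ab_semigroup_mult set \<Rightarrow> 'a set" where
  "idealizer A = {x. (\<forall>a\<in>A. x * a \<in> A) \<and> (\<forall>a\<in>A. a * x \<in> A)}"

definition separator :: "'a::ab_semigroup_mult set \<Rightarrow> 'a set" where
  "separator A = idealizer A \<inter> idealizer (- A)"

definition resid :: "'a::ab_semigroup_mult set \<Rightarrow> 'a \<Rightarrow> ('a \<times> 'a) set" where
  "resid H a = {(x, y). x * a * y \<in> H}"

definition princ_cong :: "'a::ab_semigroup_mult set \<Rightarrow> 'a rel" where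
  "princ_cong H = {(a, b). resid H a = resid H b}"

definition sg_congruence :: "'a::ab_semigroup_mult rel \<Rightarrow> bool" where
  "sg_congruence \<alpha> \<longleftrightarrow> equiv UNIV \<alpha> \<and>
     (\<forall>a b c. (a, b) \<in> \<alpha> \<longrightarrow> (a * c, b * c) \<in> \<alpha> \<and> (c * a, c * b) \<in> \<alpha>)"

(* multiplication of classes in the factor semigroup C/alpha (well defined for congruences) *)
definition quot_mult :: "'a::ab_semigroup_mult rel \<Rightarrow> 'a set \<Rightarrow> 'a set \<Rightarrow> 'a set" where
  "quot_mult \<alpha> X Y = \<alpha> `` {(SOME x. x \<in> X) * (SOME y. y \<in> Y)}"

definition annih :: "'b set \<Rightarrow> ('b \<Rightarrow> 'b \<Rightarrow> 'b) \<Rightarrow> 'b \<Rightarrow> 'b \<Rightarrow> 'b set" where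
  "annih S m z s = {x \<in> S. m x s = z}"

definition cond_star :: "'b set \<Rightarrow> ('b \<Rightarrow> 'b \<Rightarrow> 'b) \<Rightarrow> bool" where
  "cond_star S m \<longleftrightarrow>
     (\<forall>x\<in>S. \<forall>y\<in>S. m x y \<in> S) \<and>
     (\<forall>x\<in>S. \<forall>y\<in>S. \<forall>w\<in>S. m (m x y) w = m x (m y w)) \<and>
     (\<forall>x\<in>S. \<forall>y\<in>S. m x y = m y x) \<and>
     (\<exists>e\<in>S. \<exists>z\<in>S. (\<forall>x\<in>S. m e x = x \<and> m x e = x) \<and>
        (\<forall>x\<in>S. m z x = z \<and> m x z = z) \<and>
        (\<forall>s\<in>S. s \<noteq> e \<longrightarrow> annih S m z s \<noteq> {z}) \<and>
        (\<forall>s\<in>S. \<forall>t\<in>S. annih S m z s = annih S m z t \<longrightarrow> s = t))"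

end

theory Submission
  imports Defs
begin

text \<open>
  Condition (*) on a quotient C/\<alpha> of a commutative semigroup can be read off elementwise: it asks
  for an element e acting as identity modulo \<alpha>, an element z absorbing everything modulo \<alpha>, and
  that the class of a is determined by the set of u with u a \<equiv> z, this set being larger than
  the class of z unless a \<equiv> e.
  For \<alpha> = P_I the relation u a \<equiv> z means u a \<in> I, since I is the class of any of its members;
  any s \<in> Sep I plays the role of e, because s v \<in> I exactly when v \<in> I.
  Conversely, if C/\<alpha> satisfies (*), the zero class I is an ideal, and using the identity class
  one sees that a \<equiv> b modulo P_I says precisely that a and b have the same annihilator modulo \<alpha>.
\<close>

lemma princ_cong_iff:
  "(a, b) \<in> princ_cong H \<longleftrightarrow> (\<forall>x y. x * a * y \<in> H \<longleftrightarrow> x * b * y \<in> H)"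
  by (auto simp: princ_cong_def resid_def set_eq_iff)

lemma princ_congI:
  assumes "\<And>u. u * a \<in> H \<longleftrightarrow> u * b \<in> H"
  shows "(a, b) \<in> princ_cong H"
  unfolding princ_cong_iff
proof (intro allI)
  fix x y
  have "x * a * y = (x * y) * a" "x * b * y = (x * y) * b"
    by (simp_all add: ac_simps)
  then show "x * a * y \<in> H \<longleftrightarrow> x * b * y \<in> H"
    using assms[of "x * y"] by simp
qed

lemma sg_congruence_princ_cong: "sg_congruence (princ_cong H)"
proof -
  have "equiv UNIV (princ_cong H)"
    by (auto simp: equiv_def refl_on_def sym_def trans_def princ_cong_def)
  moreover have "(a * c, b * c) \<in> princ_cong H \<and> (c * a, c * b) \<in> princ_cong H"
    if "(a, b) \<in> princ_cong H" for a b c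
  proof -
    have "x * (a * c) * y \<in> H \<longleftrightarrow> x * (b * c) * y \<in> H"
      and "x * (c * a) * y \<in> H \<longleftrightarrow> x * (c * b) * y \<in> H" for x y
      using that[unfolded princ_cong_iff, rule_format, of x "c * y"]
      by (simp_all add: ac_simps)
    then show ?thesis
      by (simp add: princ_cong_iff)
  qed
  ultimately show ?thesis
    by (simp add: sg_congruence_def)
qed

lemma separator_ideal_iff:
  assumes "sg_ideal I"
  shows "s \<in> separator I \<longleftrightarrow> (\<forall>v. s * v \<in> I \<longleftrightarrow> v \<in> I)"
proof -
  have "idealizer I = UNIV"
    using assms by (auto simp: idealizer_def sg_ideal_def)
  moreover have "s \<in> idealizer (- I) \<longleftrightarrow> (\<forall>v. v \<notin> I \<longrightarrow> s * v \<notin> I)"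
    by (auto simp: idealizer_def mult.commute)
  ultimately show ?thesis
    using assms by (auto simp: separator_def sg_ideal_def)
qed

lemma princ_cong_class_ideal:
  assumes I: "sg_ideal I" and a: "a \<in> I" and s: "s \<in> separator I"
  shows "princ_cong I `` {a} = I"
proof (intro set_eqI iffI)
  fix b
  assume "b \<in> princ_cong I `` {a}"
  then have "s * a * s \<in> I \<longleftrightarrow> s * b * s \<in> I"
    by (simp add: princ_cong_iff)
  moreover have "s * a * s = (s * s) * a" "s * b * s = s * (s * b)"
    by (simp_all add: ac_simps)
  ultimately show "b \<in> I"
    using I a s by (simp add: separator_ideal_iff sg_ideal_def)
next
  fix b
  assume "b \<in> I"
  with I a show "b \<in> princ_cong I `` {a}"
    by (auto simp: sg_ideal_def intro!: princ_congI)
qed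

lemma princ_cong_class_separator:
  assumes I: "sg_ideal I" and s: "s \<in> separator I"
  shows "princ_cong I `` {s} = separator I"
proof (intro set_eqI iffI)
  fix b
  assume "b \<in> princ_cong I `` {s}"
  then have sb: "s * b * v \<in> I \<longleftrightarrow> s * s * v \<in> I" for v
    by (simp add: princ_cong_iff)
  have "b * v \<in> I \<longleftrightarrow> v \<in> I" for v
    using sb[of v] s I by (simp add: separator_ideal_iff mult.assoc)
  then show "b \<in> separator I"
    using I by (simp add: separator_ideal_iff)
next
  fix b
  assume "b \<in> separator I"
  then show "b \<in> princ_cong I `` {s}"
    using s I by (auto simp: separator_ideal_iff mult.commute intro!: princ_congI)
qed

lemma sg_congruence_equiv: "sg_congruence \<alpha> \<Longrightarrow> equiv UNIV \<alpha>"
  by (simp add: sg_congruence_def)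

lemma sg_congruence_class_eq_iff:
  "sg_congruence \<alpha> \<Longrightarrow> \<alpha> `` {a} = \<alpha> `` {b} \<longleftrightarrow> (a, b) \<in> \<alpha>"
  by (rule eq_equiv_class_iff[OF sg_congruence_equiv]) simp_all

lemma sg_congruence_mult_both:
  assumes "sg_congruence \<alpha>" "(a, b) \<in> \<alpha>"
  shows "(x * a * y, x * b * y) \<in> \<alpha>"
  using assms unfolding sg_congruence_def by blast

lemma quot_mult_classes:
  assumes C: "sg_congruence \<alpha>"
  shows "quot_mult \<alpha> (\<alpha> `` {a}) (\<alpha> `` {b}) = \<alpha> `` {a * b}"
proof -
  have E: "equiv UNIV \<alpha>"
    using C by (rule sg_congruence_equiv)
  define x where "x = (SOME x. x \<in> \<alpha> `` {a})"
  define y where "y = (SOME y. y \<in> \<alpha> `` {b})"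
  have "x \<in> \<alpha> `` {a}" "y \<in> \<alpha> `` {b}"
    unfolding x_def y_def by (rule someI, rule equiv_class_self[OF E], simp)+
  then have "(a * b, x * b) \<in> \<alpha>" "(x * b, x * y) \<in> \<alpha>"
    using C unfolding sg_congruence_def by auto
  then have "(a * b, x * y) \<in> \<alpha>"
    using E by (meson equiv_def trans_def)
  then show ?thesis
    unfolding quot_mult_def x_def[symmetric] y_def[symmetric]
    by (simp add: equiv_class_eq[OF E])
qed

lemma mem_annih_quotient_iff:
  assumes "sg_congruence \<alpha>"
  shows "\<alpha> `` {u} \<in> annih (UNIV // \<alpha>) (quot_mult \<alpha>) (\<alpha> `` {z}) (\<alpha> `` {a}) \<longleftrightarrow> (u * a, z) \<in> \<alpha>"
  using assms by (simp add: annih_def quotientI quot_mult_classes sg_congruence_class_eq_iff)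

lemma cond_star_quotient_iff:
  assumes C: "sg_congruence \<alpha>"
  shows "cond_star (UNIV // \<alpha>) (quot_mult \<alpha>) \<longleftrightarrow>
    (\<exists>e z. (\<forall>a. (e * a, a) \<in> \<alpha>) \<and> (\<forall>a. (z * a, z) \<in> \<alpha>) \<and>
      (\<forall>a. (a, e) \<notin> \<alpha> \<longrightarrow> (\<exists>u. (u * a, z) \<in> \<alpha> \<and> (u, z) \<notin> \<alpha>)) \<and>
      (\<forall>a b. (\<forall>u. (u * a, z) \<in> \<alpha> \<longleftrightarrow> (u * b, z) \<in> \<alpha>) \<longrightarrow> (a, b) \<in> \<alpha>))"
proof -
  let ?Q = "UNIV // \<alpha>" and ?m = "quot_mult \<alpha>"
  note cls = sg_congruence_class_eq_iff[OF C]
  have ball: "(\<forall>X\<in>?Q. P X) \<longleftrightarrow> (\<forall>a. P (\<alpha> `` {a}))" for P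
    by (auto simp: quotient_def)
  have bex: "(\<exists>X\<in>?Q. P X) \<longleftrightarrow> (\<exists>a. P (\<alpha> `` {a}))" for P
    by (auto simp: quotient_def)
  note mult = quot_mult_classes[OF C]
  have semigroup: "(\<forall>x\<in>?Q. \<forall>y\<in>?Q. ?m x y \<in> ?Q) \<and>
      (\<forall>x\<in>?Q. \<forall>y\<in>?Q. \<forall>w\<in>?Q. ?m (?m x y) w = ?m x (?m y w)) \<and>
      (\<forall>x\<in>?Q. \<forall>y\<in>?Q. ?m x y = ?m y x)"
    by (simp add: ball mult quotientI ac_simps)
  have unit: "(\<forall>X\<in>?Q. ?m (\<alpha> `` {e}) X = X \<and> ?m X (\<alpha> `` {e}) = X) \<longleftrightarrow> (\<forall>a. (e * a, a) \<in> \<alpha>)" for e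
    by (simp add: ball mult cls mult.commute)
  have zero: "(\<forall>X\<in>?Q. ?m (\<alpha> `` {z}) X = \<alpha> `` {z} \<and> ?m X (\<alpha> `` {z}) = \<alpha> `` {z}) \<longleftrightarrow>
      (\<forall>a. (z * a, z) \<in> \<alpha>)" for z
    by (simp add: ball mult cls mult.commute)
  have annih_eq: "annih ?Q ?m (\<alpha> `` {z}) (\<alpha> `` {a}) = annih ?Q ?m (\<alpha> `` {z}) (\<alpha> `` {b}) \<longleftrightarrow>
      (\<forall>u. (u * a, z) \<in> \<alpha> \<longleftrightarrow> (u * b, z) \<in> \<alpha>)" for z a b
  proof -
    have "annih ?Q ?m (\<alpha> `` {z}) X \<subseteq> ?Q" for X
      by (auto simp: annih_def)
    then have "annih ?Q ?m (\<alpha> `` {z}) (\<alpha> `` {a}) = annih ?Q ?m (\<alpha> `` {z}) (\<alpha> `` {b}) \<longleftrightarrow>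
        (\<forall>X\<in>?Q. X \<in> annih ?Q ?m (\<alpha> `` {z}) (\<alpha> `` {a}) \<longleftrightarrow> X \<in> annih ?Q ?m (\<alpha> `` {z}) (\<alpha> `` {b}))"
      by blast
    then show ?thesis
      by (simp add: ball mem_annih_quotient_iff[OF C])
  qed
  have annih_nontrivial:
    "annih ?Q ?m (\<alpha> `` {z}) (\<alpha> `` {a}) \<noteq> {\<alpha> `` {z}} \<longleftrightarrow> (\<exists>u. (u * a, z) \<in> \<alpha> \<and> (u, z) \<notin> \<alpha>)"
    if "\<forall>a. (z * a, z) \<in> \<alpha>" for z a
  proof -
    have "\<alpha> `` {z} \<in> annih ?Q ?m (\<alpha> `` {z}) (\<alpha> `` {a})"
      using that by (simp add: mem_annih_quotient_iff[OF C])
    then have "annih ?Q ?m (\<alpha> `` {z}) (\<alpha> `` {a}) \<noteq> {\<alpha> `` {z}} \<longleftrightarrow>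
        (\<exists>X\<in>?Q. X \<in> annih ?Q ?m (\<alpha> `` {z}) (\<alpha> `` {a}) \<and> X \<noteq> \<alpha> `` {z})"
      by (auto simp: annih_def)
    then show ?thesis
      by (simp add: bex cls mem_annih_quotient_iff[OF C])
  qed
  show ?thesis
    unfolding cond_star_def bex
    using semigroup unit zero annih_eq
    by (simp add: ball cls annih_nontrivial cong: conj_cong)
qed

lemma cond_star_princ_cong_quotient:
  assumes I: "sg_ideal I" and s: "s \<in> separator I"
  shows "cond_star (UNIV // princ_cong I) (quot_mult (princ_cong I))"
proof -
  let ?P = "princ_cong I"
  obtain z where z: "z \<in> I"
    using I by (auto simp: sg_ideal_def)
  have ideal: "v \<in> I \<Longrightarrow> u * v \<in> I" for u v
    using I by (simp add: sg_ideal_def)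
  have sep: "s * v \<in> I \<longleftrightarrow> v \<in> I" for v
    using I s by (simp add: separator_ideal_iff)
  have zero_class: "(u, z) \<in> ?P \<longleftrightarrow> u \<in> I" for u
  proof -
    have "(u, z) \<in> ?P \<longleftrightarrow> (z, u) \<in> ?P"
      by (auto simp: princ_cong_def)
    then show ?thesis
      using princ_cong_class_ideal[OF I z s] by blast
  qed
  show ?thesis
    unfolding cond_star_quotient_iff[OF sg_congruence_princ_cong]
  proof (rule exI[of _ s], rule exI[of _ z], intro conjI allI impI)
    fix a
    show "(s * a, a) \<in> ?P"
      by (rule princ_congI) (simp add: mult.left_commute[of _ s] sep)
    show "(z * a, z) \<in> ?P"
      by (simp add: zero_class ideal mult.commute[of z] z)
  next
    fix a
    assume "(a, s) \<notin> ?P"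
    then obtain x y where "\<not> (x * a * y \<in> I \<longleftrightarrow> x * s * y \<in> I)"
      by (auto simp: princ_cong_iff)
    moreover have "x * s * y = s * (x * y)" "x * a * y = (x * y) * a"
      by (simp_all add: ac_simps)
    ultimately have "(x * y) * a \<in> I" "x * y \<notin> I"
      using ideal[of "x * y" a] sep[of "x * y"] by (auto simp: mult.commute)
    then show "\<exists>u. (u * a, z) \<in> ?P \<and> (u, z) \<notin> ?P"
      by (auto simp: zero_class)
  next
    fix a b
    assume "\<forall>u. (u * a, z) \<in> ?P \<longleftrightarrow> (u * b, z) \<in> ?P"
    then show "(a, b) \<in> ?P"
      by (intro princ_congI) (simp add: zero_class)
  qed
qed

lemma sg_ideal_zero_class:
  assumes C: "sg_congruence \<alpha>" and zero: "\<And>a. (z * a, z) \<in> \<alpha>"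
  shows "sg_ideal (\<alpha> `` {z})"
  unfolding sg_ideal_def
proof (intro conjI allI impI)
  note cls = sg_congruence_class_eq_iff[OF C]
  have mem: "v \<in> \<alpha> `` {z} \<longleftrightarrow> \<alpha> `` {v} = \<alpha> `` {z}" for v
    using cls[of z v] by auto
  show "\<alpha> `` {z} \<noteq> {}"
    using mem by blast
  fix c a
  assume "a \<in> \<alpha> `` {z}"
  then have "(c * a, c * z) \<in> \<alpha>"
    using C mem cls by (simp add: sg_congruence_def)
  then have "\<alpha> `` {c * a} = \<alpha> `` {z}"
    using zero[of c] by (simp add: cls[symmetric] mult.commute)
  then show "c * a \<in> \<alpha> `` {z}" "a * c \<in> \<alpha> `` {z}"
    unfolding mem by (simp_all add: mult.commute)
qed

lemma princ_cong_of_cond_star_quotient: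
  assumes C: "sg_congruence \<alpha>" and star: "cond_star (UNIV // \<alpha>) (quot_mult \<alpha>)"
  shows "\<exists>I. sg_ideal I \<and> \<alpha> = princ_cong I"
proof -
  obtain e z where unit: "\<And>a. (e * a, a) \<in> \<alpha>" and zero: "\<And>a. (z * a, z) \<in> \<alpha>"
    and annih_inj: "\<And>a b. (\<forall>u. (u * a, z) \<in> \<alpha> \<longleftrightarrow> (u * b, z) \<in> \<alpha>) \<Longrightarrow> (a, b) \<in> \<alpha>"
    using star unfolding cond_star_quotient_iff[OF C] by blast
  note cls = sg_congruence_class_eq_iff[OF C]
  let ?I = "\<alpha> `` {z}"
  have mem_I: "v \<in> ?I \<longleftrightarrow> \<alpha> `` {v} = \<alpha> `` {z}" for v
    using cls[of z v] by auto
  have "sg_ideal ?I"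
    using C zero by (rule sg_ideal_zero_class)
  moreover have "\<alpha> = princ_cong ?I"
  proof (intro set_eqI iffI)
    fix p
    assume "p \<in> \<alpha>"
    then obtain a b where p: "p = (a, b)" "(a, b) \<in> \<alpha>"
      by (cases p) auto
    then have "\<alpha> `` {x * a * y} = \<alpha> `` {x * b * y}" for x y
      using sg_congruence_mult_both[OF C] cls by blast
    then show "p \<in> princ_cong ?I"
      unfolding p princ_cong_iff mem_I by simp
  next
    fix p
    assume "p \<in> princ_cong ?I"
    then obtain a b where p: "p = (a, b)" "(a, b) \<in> princ_cong ?I"
      by (cases p) auto
    have "\<alpha> `` {u * v * e} = \<alpha> `` {u * v}" for u v
      using unit[of "u * v"] by (simp add: cls mult.commute)
    then have "(u * a, z) \<in> \<alpha> \<longleftrightarrow> (u * b, z) \<in> \<alpha>" for u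
      using p(2)[unfolded princ_cong_iff mem_I, rule_format, of u e] by (simp add: cls[symmetric])
    then show "p \<in> \<alpha>"
      using annih_inj p(1) by blast
  qed
  ultimately show ?thesis
    by blast
qed

theorem theorem1:
  shows "(\<forall>I :: 'a::ab_semigroup_mult set. sg_ideal I \<and> separator I \<noteq> {} \<longrightarrow>
            sg_congruence (princ_cong I) \<and>
            I \<in> UNIV // princ_cong I \<and> separator I \<in> UNIV // princ_cong I \<and>
            cond_star (UNIV // princ_cong I) (quot_mult (princ_cong I))) \<and>
         (\<forall>\<alpha> :: 'a rel. sg_congruence \<alpha> \<and> cond_star (UNIV // \<alpha>) (quot_mult \<alpha>) \<longrightarrow>
            (\<exists>I. sg_ideal I \<and> \<alpha> = princ_cong I))"
proof (intro conjI allI impI; elim conjE)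
  fix I :: "'a set"
  assume I: "sg_ideal I" and "separator I \<noteq> {}"
  then obtain s a where s: "s \<in> separator I" and a: "a \<in> I"
    by (auto simp: sg_ideal_def)
  show "sg_congruence (princ_cong I)"
    by (rule sg_congruence_princ_cong)
  show "I \<in> UNIV // princ_cong I" "separator I \<in> UNIV // princ_cong I"
    using princ_cong_class_ideal[OF I a s] princ_cong_class_separator[OF I s]
    by (metis UNIV_I quotientI)+
  show "cond_star (UNIV // princ_cong I) (quot_mult (princ_cong I))"
    using I s by (rule cond_star_princ_cong_quotient)
next
  fix \<alpha> :: "'a rel"
  assume "sg_congruence \<alpha>" "cond_star (UNIV // \<alpha>) (quot_mult \<alpha>)"
  then show "\<exists>I. sg_ideal I \<and> \<alpha> = princ_cong I"
    by (rule princ_cong_of_cond_star_quotient)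
qed

end
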